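(* Let $X$ be an $\mathcal M$-set, let $A\subset\omega$ be co-infinite, and let $x\in X$ be supported on $A$. Then: (1) if $f,g\in\mathcal M$ agree on $A$, then $f.x=g.x$; (2) for every $f\in\mathcal M$, $f.x$ is supported on $f(A)$; (3) if $f\in\mathcal M$ and $A'\subset A$ are such that $f.x$ is supported on $f(A')$, then $x$ is supported on $A'$.
   Context: $\omega=\{1,2,3,\dots\}$, $\mathcal M$ the monoid of injections $\omega\to\omega$; an $\mathcal M$-set is a set with left $\mathcal M$-action. For $A\subset\omega$, $\mathcal M_A$ is the submonoid of injections fixing $A$ elementwise, and $x$ is supported on $A$ if $f.x=x$ for all $f\in\mathcal M_A$. $A$ is co-infinite if $\omega\setminus A$ is infinite. *)

theory Defs
  imports Main
begin

text \<open>An injection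
omega to omega is represented canonically as a function nat to nat that is
injective, maps positive numbers to positive numbers and fixes 0 (so each
injection of omega has exactly one representative).\<close>

definition omega :: "nat set" where
  "omega = {n. 0 < n}"

definition Mon :: "(nat \<Rightarrow> nat) set" where
  "Mon = {f. inj f \<and> f 0 = 0 \<and> (\<forall>n\<in>omega. f n \<in> omega)}"

definition M_set :: "'x set \<Rightarrow> ((nat \<Rightarrow> nat) \<Rightarrow> 'x \<Rightarrow> 'x) \<Rightarrow> bool" where
  "M_set X act \<longleftrightarrow>
     (\<forall>f\<in>Mon. \<forall>x\<in>X. act f x \<in> X) \<and>
     (\<forall>x\<in>X. act id x = x) \<and>
     (\<forall>f\<in>Mon. \<forall>g\<in>Mon. \<forall>x\<in>X. act (f \<circ> g) x = act f (act g x))"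

definition Mon_fix :: "nat set \<Rightarrow> (nat \<Rightarrow> nat) set" where
  "Mon_fix A = {f \<in> Mon. \<forall>a\<in>A. f a = a}"

definition supported_on :: "((nat \<Rightarrow> nat) \<Rightarrow> 'x \<Rightarrow> 'x) \<Rightarrow> 'x \<Rightarrow> nat set \<Rightarrow> bool" where
  "supported_on act x A \<longleftrightarrow> (\<forall>f\<in>Mon_fix A. act f x = x)"

definition co_infinite :: "nat set \<Rightarrow> bool" where
  "co_infinite A \<longleftrightarrow> infinite (omega - A)"

end

(*
  If f and h agree on a support S of x and range f is contained in range h, then
  f = h o k with k = inv h o f fixing S pointwise, so f.x = h.(k.x) = h.x.  Given f and g
  agreeing on a co-infinite S, the restriction of f to S extends to an injection h mapping
  omega - S onto the infinite set f(omega - S) \<union> g(omega - S); the range of h contains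
  those of f and g, whence f.x = h.x = g.x.  Part (2) is part (1) applied to g o f and f
  for g fixing f(A).  For part (3), extend the inverse of f on f(A) to some r in M: then
  r.(f.x) = x by (1), and by (2) it is supported on r(f(A')) = A'.
*)

theory Submission
  imports Defs "HOL-Library.Infinite_Set"
begin

lemma Mon_iff: "f \<in> Mon \<longleftrightarrow> inj f \<and> f 0 = 0"
proof
  assume "f \<in> Mon"
  then show "inj f \<and> f 0 = 0" by (simp add: Mon_def)
next
  assume f: "inj f \<and> f 0 = 0"
  have "f n \<in> omega" if "n \<in> omega" for n
    using f that injD[of f n 0] unfolding omega_def by fastforce
  with f show "f \<in> Mon" unfolding Mon_def by blast
qed

lemma Mon_comp: "f \<in> Mon \<Longrightarrow> g \<in> Mon \<Longrightarrow> f \<circ> g \<in> Mon"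
  by (simp add: Mon_iff inj_compose)

lemma Mon_id: "id \<in> Mon"
  by (simp add: Mon_iff)

lemma Mon_image_omega: "f \<in> Mon \<Longrightarrow> f ` omega \<subseteq> omega"
  unfolding Mon_def by blast

lemma ex_bij_betw_infinite_nat:
  fixes B C :: "nat set"
  assumes "infinite B" and "infinite C"
  obtains b where "bij_betw b B C"
  by (meson assms bij_betw_inv_into bij_betw_trans bij_enumerate)

lemma Mon_extend:
  assumes S: "S \<subseteq> omega" and phi: "inj_on \<phi> S" "\<phi> ` S \<subseteq> omega"
    and C: "C \<subseteq> omega - \<phi> ` S" "infinite C" and co: "co_infinite S"
  obtains h where "h \<in> Mon" "\<forall>a\<in>S. h a = \<phi> a" "h ` (omega - S) = C"
proof -
  obtain b where b: "bij_betw b (omega - S) C"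
    using ex_bij_betw_infinite_nat co C(2) unfolding co_infinite_def by blast
  define h where "h n = (if n \<in> S then \<phi> n else if n = 0 then 0 else b n)" for n
  have "0 \<notin> omega" "0 \<notin> S" "0 \<notin> C" "0 \<notin> \<phi> ` S" using S C phi(2) unfolding omega_def by auto
  then have on_S: "\<forall>a\<in>S. h a = \<phi> a" and on_rest: "\<forall>n\<in>omega - S. h n = b n" and "h 0 = 0"
    unfolding h_def omega_def by auto
  have img_S: "h ` S = \<phi> ` S" and img_rest: "h ` (omega - S) = C"
  proof -
    show "h ` S = \<phi> ` S" by (rule image_cong) (simp_all add: on_S)
    have "h ` (omega - S) = b ` (omega - S)" by (rule image_cong) (simp_all add: on_rest)
    with b show "h ` (omega - S) = C" by (simp add: bij_betw_def)
  qed
  have "inj_on h S" using phi(1) on_S inj_on_cong[of S h \<phi>] by simp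
  moreover have "inj_on h (omega - S)"
    using b on_rest inj_on_cong[of "omega - S" h b] by (simp add: bij_betw_def)
  moreover have "h ` S \<inter> h ` (omega - S) = {}" using C(1) img_S img_rest by blast
  moreover have "S - (omega - S) = S" "(omega - S) - S = omega - S" by blast+
  ultimately have "inj_on h (S \<union> (omega - S))" unfolding inj_on_Un by simp
  moreover have "UNIV = insert 0 (S \<union> (omega - S))" using S unfolding omega_def by auto
  moreover have "h 0 \<notin> h ` (S \<union> (omega - S))"
    using \<open>h 0 = 0\<close> \<open>0 \<notin> C\<close> \<open>0 \<notin> \<phi> ` S\<close> img_S img_rest by auto
  moreover have "0 \<notin> S \<union> (omega - S)" using \<open>0 \<notin> omega\<close> S by blast
  ultimately have "inj h" by (metis inj_on_insert Diff_triv Diff_empty Diff_insert0)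
  with \<open>h 0 = 0\<close> have "h \<in> Mon" by (simp add: Mon_iff)
  then show ?thesis using on_S img_rest by (rule that)
qed

lemma co_infinite_subset: "A' \<subseteq> A \<Longrightarrow> co_infinite A \<Longrightarrow> co_infinite A'"
  unfolding co_infinite_def by (meson Diff_mono finite_subset order_refl)

lemma co_infinite_image:
  assumes f: "f \<in> Mon" and A: "co_infinite A"
  shows "co_infinite (f ` A)"
proof -
  have "inj f" using f by (simp add: Mon_iff)
  then have "f ` (omega - A) \<subseteq> omega - f ` A"
    using Mon_image_omega[OF f] by (auto dest: injD)
  moreover have "infinite (f ` (omega - A))"
    using A \<open>inj f\<close> finite_imageD inj_on_subset unfolding co_infinite_def by blast
  ultimately show ?thesis unfolding co_infinite_def using finite_subset by blast
qed

lemma Mon_factor: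
  assumes f: "f \<in> Mon" and h: "h \<in> Mon"
    and agree: "\<forall>a\<in>S. f a = h a" and range: "range f \<subseteq> range h"
  shows "inv h \<circ> f \<in> Mon_fix S" and "h \<circ> (inv h \<circ> f) = f"
proof -
  have "inj f" "inj h" "f 0 = 0" "h 0 = 0" using f h by (simp_all add: Mon_iff)
  show "h \<circ> (inv h \<circ> f) = f"
    using range by (auto simp: f_inv_into_f subset_iff)
  then have "inj (inv h \<circ> f)" using \<open>inj f\<close> by (metis inj_on_imageI2)
  moreover have "(inv h \<circ> f) 0 = 0" using \<open>inj h\<close> \<open>f 0 = 0\<close> \<open>h 0 = 0\<close> by (metis comp_apply inv_f_f)
  moreover have "\<forall>a\<in>S. (inv h \<circ> f) a = a" using agree \<open>inj h\<close> by simp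
  ultimately show "inv h \<circ> f \<in> Mon_fix S" by (simp add: Mon_fix_def Mon_iff)
qed

context
  fixes X :: "'x set" and act :: "(nat \<Rightarrow> nat) \<Rightarrow> 'x \<Rightarrow> 'x"
  assumes M: "M_set X act"
begin

lemma act_closed: "f \<in> Mon \<Longrightarrow> x \<in> X \<Longrightarrow> act f x \<in> X"
  using M unfolding M_set_def by blast

lemma act_id: "x \<in> X \<Longrightarrow> act id x = x"
  using M unfolding M_set_def by blast

lemma act_comp: "f \<in> Mon \<Longrightarrow> g \<in> Mon \<Longrightarrow> x \<in> X \<Longrightarrow> act (f \<circ> g) x = act f (act g x)"
  using M unfolding M_set_def by blast

lemma supported_act_eq_if_range_subset:
  assumes x: "x \<in> X" "supported_on act x S" and f: "f \<in> Mon" and h: "h \<in> Mon"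
    and agree: "\<forall>a\<in>S. f a = h a" and range: "range f \<subseteq> range h"
  shows "act f x = act h x"
proof -
  have k: "inv h \<circ> f \<in> Mon_fix S" and factor: "h \<circ> (inv h \<circ> f) = f"
    using Mon_factor[OF f h agree range] by blast+
  have "act f x = act h (act (inv h \<circ> f) x)"
    using act_comp[OF h _ x(1)] k factor unfolding Mon_fix_def by force
  also have "act (inv h \<circ> f) x = x" using x(2) k unfolding supported_on_def by blast
  finally show ?thesis .
qed

lemma supported_act_eq_if_agree:
  assumes x: "x \<in> X" "supported_on act x S" and S: "S \<subseteq> omega" "co_infinite S"
    and f: "f \<in> Mon" and g: "g \<in> Mon" and agree: "\<forall>a\<in>S. f a = g a"
  shows "act f x = act g x"
proof -
  let ?B = "omega - S"
  have "inj f" "inj g" using f g by (simp_all add: Mon_iff)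
  have "f ` ?B \<inter> f ` S = {}" using \<open>inj f\<close> by (auto dest: injD)
  moreover have "g ` ?B \<inter> f ` S = {}"
    using agree \<open>inj g\<close> by (force dest: injD)
  ultimately have C: "f ` ?B \<union> g ` ?B \<subseteq> omega - f ` S"
    using Mon_image_omega[OF f] Mon_image_omega[OF g] by blast
  have "infinite (f ` ?B \<union> g ` ?B)"
    using S(2) \<open>inj f\<close> finite_imageD inj_on_subset unfolding co_infinite_def by blast
  moreover have "f ` S \<subseteq> omega" using Mon_image_omega[OF f] S(1) by blast
  ultimately obtain h where h: "h \<in> Mon" "\<forall>a\<in>S. h a = f a" "h ` ?B = f ` ?B \<union> g ` ?B"
    using Mon_extend[OF S(1) inj_on_subset[OF \<open>inj f\<close>] _ C _ S(2)] by blast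
  have range_sub: "range k \<subseteq> range h" if "k \<in> Mon" "\<forall>a\<in>S. k a = h a" "k ` ?B \<subseteq> h ` ?B" for k
  proof
    fix n assume "n \<in> range k"
    then obtain m where "n = k m" by blast
    moreover have "m = 0 \<or> m \<in> S \<or> m \<in> ?B" unfolding omega_def by auto
    ultimately show "n \<in> range h"
      using that h(1) by (auto simp: Mon_iff)
  qed
  have "range f \<subseteq> range h" using range_sub[OF f] h(2,3) by simp
  then have "act f x = act h x"
    using supported_act_eq_if_range_subset[OF x f h(1)] h(2) by simp
  have "range g \<subseteq> range h" using range_sub[OF g] h(2,3) agree by simp
  then have "act g x = act h x"
    using supported_act_eq_if_range_subset[OF x g h(1)] h(2) agree by simp
  with \<open>act f x = act h x\<close> show ?thesis by simp
qed

lemma supported_on_act_image: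
  assumes x: "x \<in> X" "supported_on act x S" and S: "S \<subseteq> omega" "co_infinite S"
    and f: "f \<in> Mon"
  shows "supported_on act (act f x) (f ` S)"
  unfolding supported_on_def
proof
  fix g assume "g \<in> Mon_fix (f ` S)"
  then have g: "g \<in> Mon" and "\<forall>a\<in>S. (g \<circ> f) a = f a" by (auto simp: Mon_fix_def)
  then have "act (g \<circ> f) x = act f x"
    using supported_act_eq_if_agree[OF x S Mon_comp[OF g f] f] by blast
  then show "act g (act f x) = act f x" using act_comp[OF g f x(1)] by simp
qed

lemma supported_on_if_act_supported_on:
  assumes x: "x \<in> X" "supported_on act x A" and A: "A \<subseteq> omega" "co_infinite A"
    and f: "f \<in> Mon" and A': "A' \<subseteq> A" "supported_on act (act f x) (f ` A')"
  shows "supported_on act x A'"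
proof -
  have "inj f" using f by (simp add: Mon_iff)
  have fA: "f ` A \<subseteq> omega" using Mon_image_omega[OF f] A(1) by blast
  have inv_f: "inj_on (inv f) (f ` A)" by (rule inj_on_inv_into) blast
  have "inv f ` f ` A = A" using \<open>inj f\<close> by (simp add: image_comp)
  then have "inv f ` f ` A \<subseteq> omega" "omega - A \<subseteq> omega - inv f ` f ` A" using A(1) by auto
  moreover have "infinite (omega - A)" using A(2) unfolding co_infinite_def .
  ultimately obtain r where r: "r \<in> Mon" "\<forall>b\<in>f ` A. r b = inv f b"
    using Mon_extend[OF fA inv_f _ _ _ co_infinite_image[OF f A(2)]] by metis
  then have r_f: "\<forall>a\<in>A. (r \<circ> f) a = id a" using \<open>inj f\<close> by simp
  have "act r (act f x) = act (r \<circ> f) x" by (rule act_comp[OF r(1) f x(1), symmetric])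
  also have "\<dots> = act id x" by (rule supported_act_eq_if_agree[OF x A Mon_comp[OF r(1) f] Mon_id r_f])
  also have "\<dots> = x" by (rule act_id[OF x(1)])
  finally have "act r (act f x) = x" .
  moreover have "supported_on act (act r (act f x)) (r ` f ` A')"
  proof (rule supported_on_act_image[OF act_closed[OF f x(1)] A'(2) _ _ r(1)])
    show "f ` A' \<subseteq> omega" using fA A'(1) by blast
    show "co_infinite (f ` A')" using co_infinite_image[OF f] co_infinite_subset[OF A'(1) A(2)] .
  qed
  moreover have "r ` f ` A' = A'" using r_f A'(1) by (force simp: image_comp)
  ultimately show ?thesis by simp
qed

end

theorem lemma1p3:
  fixes X :: "'x set" and act :: "(nat \<Rightarrow> nat) \<Rightarrow> 'x \<Rightarrow> 'x"
    and A :: "nat set" and x :: 'x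
  assumes "M_set X act"
    and "A \<subseteq> omega" and "co_infinite A"
    and "x \<in> X" and "supported_on act x A"
  shows "(\<forall>f\<in>Mon. \<forall>g\<in>Mon. (\<forall>a\<in>A. f a = g a) \<longrightarrow> act f x = act g x)
       \<and> (\<forall>f\<in>Mon. supported_on act (act f x) (f ` A))
       \<and> (\<forall>f\<in>Mon. \<forall>A'. A' \<subseteq> A \<and> supported_on act (act f x) (f ` A')
                      \<longrightarrow> supported_on act x A')"
  using supported_act_eq_if_agree[OF assms(1,4,5,2,3)]
    supported_on_act_image[OF assms(1,4,5,2,3)]
    supported_on_if_act_supported_on[OF assms(1,4,5,2,3)]
  by blast

end
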